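(* The clone $\mathscr{C}_{I_{\bar d=0}}$ is precomplete, i.e., it is a coatom of the lattice of all clones on $\mathbb{N}$: $\mathscr{C}_{I_{\bar d=0}}\ne\mathscr{O}$, and the only clone properly containing $\mathscr{C}_{I_{\bar d=0}}$ is $\mathscr{O}$.
   Context: $\mathbb{N}=\{0,1,2,\dots\}$, $\mathscr{O}$ is the set of all finitary functions $\mathbb{N}^k\to\mathbb{N}$, $k\ge1$. A clone is a subset of $\mathscr{O}$ containing all projections and closed under composition. For $A\subseteq\mathbb{N}$, $\bar d(A)=\limsup_{n\to\infty}\frac{|A\cap[0,n)|}{n}$. $\mathscr{C}_{I_{\bar d=0}}$ is the set of all $k$-ary $f\in\mathscr{O}$ such that $\bar d(f[A^k])=0$ for every $A\subseteq\mathbb{N}$ with $\bar d(A)=0$. *)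

theory Defs
  imports Complex_Main "HOL-Library.Liminf_Limsup" "HOL-Library.Extended_Real"
begin

text \<open>A finitary operation on the naturals is represented as a pair (k, f) with
  arity k \<ge> 1 and f acting on argument lists; to make the representation
  canonical, f is required to return 0 on lists whose length is not k.\<close>

type_synonym op = "nat \<times> (nat list \<Rightarrow> nat)"

definition all_ops :: "op set" where
  "all_ops = {(k, f). k \<ge> 1 \<and> (\<forall>xs. length xs \<noteq> k \<longrightarrow> f xs = 0)}"

definition proj :: "nat \<Rightarrow> nat \<Rightarrow> op" where
  "proj k i = (k, \<lambda>xs. if length xs = k then xs ! i else 0)"

definition compose :: "op \<Rightarrow> op list \<Rightarrow> nat \<Rightarrow> op" where
  "compose F Gs k = (k, \<lambda>xs. if length xs = k then snd F (map (\<lambda>G. snd G xs) Gs) else 0)"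

definition is_clone :: "op set \<Rightarrow> bool" where
  "is_clone C \<longleftrightarrow> C \<subseteq> all_ops
     \<and> (\<forall>k i. 1 \<le> k \<and> i < k \<longrightarrow> proj k i \<in> C)
     \<and> (\<forall>F Gs k. F \<in> C \<and> length Gs = fst F \<and> k \<ge> 1 \<and> (\<forall>G\<in>set Gs. G \<in> C \<and> fst G = k)
           \<longrightarrow> compose F Gs k \<in> C)"

definition upper_density :: "nat set \<Rightarrow> ereal" where
  "upper_density A = limsup (\<lambda>n. ereal (real (card (A \<inter> {..<n})) / real n))"

definition image_pow :: "op \<Rightarrow> nat set \<Rightarrow> nat set" where
  "image_pow F A = snd F ` {xs. length xs = fst F \<and> set xs \<subseteq> A}"

definition C_d0 :: "op set" where
  "C_d0 = {F \<in> all_ops. \<forall>A. upper_density A = 0 \<longrightarrow> upper_density (image_pow F A) = 0}"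

definition precomplete :: "op set \<Rightarrow> bool" where
  "precomplete C \<longleftrightarrow> is_clone C \<and> C \<noteq> all_ops
     \<and> (\<forall>D. is_clone D \<and> C \<subset> D \<longrightarrow> D = all_ops)"

end

theory Submission
  imports Defs "HOL-Library.Discrete_Functions"
begin

text \<open>
  Sets of density zero are closed under subsets and finite unions, which makes \<open>C_d0\<close> a clone;
  it misses the square root, which maps the squares onto \<open>\<nat>\<close>.
  For maximality, let \<open>F \<in> D - C_d0\<close>, so that \<open>F\<close> maps \<open>A\<^sup>m\<close> onto a set \<open>B\<close> of positive
  upper density for some \<open>A\<close> of density zero. There is a map \<open>\<sigma> : \<nat> \<rightarrow> B\<close> whose preimages
  of density zero sets have density zero: cut \<open>\<nat>\<close> into rapidly growing blocks \<open>[n\<^sub>i, n\<^sub>i\<^sub>+\<^sub>1)\<close>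
  such that \<open>B\<close> fills a fixed fraction of \<open>[0, n\<^sub>i)\<close>, and let \<open>\<sigma>\<close> run periodically through
  \<open>B \<inter> [0, n\<^sub>i)\<close> on the \<open>i\<close>-th block. Composing \<open>F\<close> with operations of \<open>C_d0\<close> that pick
  preimage tuples in \<open>A\<^sup>m\<close> puts \<open>\<sigma> \<circ> h\<close> into \<open>D\<close> for every \<open>h\<close>, and \<open>h\<close> is recovered from
  \<open>h\<^sup>2\<close> and \<open>\<sigma> \<circ> h\<close> by the operation \<open>(x\<^sup>2, \<sigma> x) \<mapsto> x\<close>, which lies in \<open>C_d0\<close>.
\<close>

definition partial_density :: "nat set \<Rightarrow> nat \<Rightarrow> real" where
  "partial_density A m = real (card (A \<inter> {..<m})) / real m"

definition density_zero :: "nat set \<Rightarrow> bool" where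
  "density_zero A \<longleftrightarrow> partial_density A \<longlonglongrightarrow> 0"

lemma upper_density_eq_0_iff: "upper_density A = 0 \<longleftrightarrow> density_zero A"
proof -
  let ?f = "\<lambda>n. ereal (real (card (A \<inter> {..<n})) / real n)"
  have "0 \<le> liminf ?f" by (intro Liminf_bounded) simp
  moreover have "liminf ?f \<le> limsup ?f" by (rule Liminf_le_Limsup) simp
  ultimately have "limsup ?f = 0 \<longleftrightarrow> liminf ?f = 0 \<and> limsup ?f = 0" by auto
  also have "\<dots> \<longleftrightarrow> ?f \<longlonglongrightarrow> 0" by (rule tendsto_iff_Liminf_eq_Limsup[symmetric]) simp
  finally show ?thesis
    unfolding upper_density_def density_zero_def partial_density_def by (simp add: zero_ereal_def)
qed

lemma density_zero_if_card_le:
  assumes "(\<lambda>n. g n / real n) \<longlonglongrightarrow> 0" and "\<And>n. real (card (A \<inter> {..<n})) \<le> g n"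
  shows "density_zero A"
  unfolding density_zero_def partial_density_def
proof (rule tendsto_sandwich[OF _ _ tendsto_const assms(1)])
  show "\<forall>\<^sub>F n in sequentially. real (card (A \<inter> {..<n})) / real n \<le> g n / real n"
    by (intro always_eventually allI divide_right_mono assms(2)) simp
qed simp

lemma density_zero_subset: "density_zero B \<Longrightarrow> A \<subseteq> B \<Longrightarrow> density_zero A"
  unfolding density_zero_def[of B] partial_density_def
  by (erule density_zero_if_card_le) (auto intro: card_mono)

lemma density_zero_Un: "density_zero A \<Longrightarrow> density_zero B \<Longrightarrow> density_zero (A \<union> B)"
  unfolding density_zero_def[of A] density_zero_def[of B] partial_density_def
proof (drule (1) tendsto_add, rule density_zero_if_card_le)
  show "real (card ((A \<union> B) \<inter> {..<n})) \<le> real (card (A \<inter> {..<n})) + real (card (B \<inter> {..<n}))" for n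
    by (metis Int_Un_distrib2 card_Un_le of_nat_add of_nat_le_iff)
qed (simp add: add_divide_distrib)

lemma density_zero_finite: "finite A \<Longrightarrow> density_zero A"
  by (rule density_zero_if_card_le[where g = "\<lambda>_. real (card A)"])
     (auto intro: lim_const_over_n card_mono)

lemma density_zero_finite_UN:
  "finite I \<Longrightarrow> (\<And>i. i \<in> I \<Longrightarrow> density_zero (A i)) \<Longrightarrow> density_zero (\<Union>i\<in>I. A i)"
  by (induction I rule: finite_induct) (auto intro: density_zero_Un density_zero_finite)

lemma not_density_zero_UNIV: "\<not> density_zero UNIV"
proof
  assume "density_zero UNIV"
  moreover have "(\<lambda>n. real (card (UNIV \<inter> {..<n})) / real n) \<longlonglongrightarrow> 1"
    by (rule tendsto_eventually) (use eventually_gt_at_top[of 0] in \<open>eventually_elim, simp\<close>)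
  ultimately show False unfolding density_zero_def partial_density_def using LIMSEQ_unique by fastforce
qed

definition squares :: "nat set" where "squares = range power2"

lemma card_squares_less: "real (card (squares \<inter> {..<n})) \<le> sqrt (real n) + 1"
proof -
  let ?m = "nat \<lceil>sqrt (real n)\<rceil>"
  have "squares \<inter> {..<n} \<subseteq> power2 ` {..<?m}"
  proof
    fix x assume "x \<in> squares \<inter> {..<n}"
    then obtain k where x: "x = k\<^sup>2" "(real k)\<^sup>2 < real n"
      unfolding squares_def by (auto simp flip: of_nat_power)
    then have "real k < sqrt (real n)" by (intro real_less_rsqrt) simp
    then have "k < ?m" by linarith
    then show "x \<in> power2 ` {..<?m}" using x by auto
  qed
  then have "card (squares \<inter> {..<n}) \<le> card (power2 ` {..<?m})" by (intro card_mono) auto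
  also have "\<dots> \<le> ?m" using card_image_le[of "{..<?m}"] by simp
  finally have "real (card (squares \<inter> {..<n})) \<le> real ?m" by linarith
  also have "\<dots> = real_of_int \<lceil>sqrt (real n)\<rceil>" by simp
  also have "\<dots> \<le> sqrt (real n) + 1" by linarith
  finally show ?thesis .
qed

lemma density_zero_squares: "density_zero squares"
proof (rule density_zero_if_card_le[OF _ card_squares_less])
  have "(\<lambda>n. sqrt (inverse (real n))) \<longlonglongrightarrow> sqrt 0"
    by (intro tendsto_real_sqrt lim_inverse_n)
  then have "(\<lambda>n. inverse (sqrt (real n)) + inverse (real n)) \<longlonglongrightarrow> 0 + 0"
    by (intro tendsto_add lim_inverse_n) (simp add: real_sqrt_inverse)
  moreover have "(sqrt (real n) + 1) / real n = inverse (sqrt (real n)) + inverse (real n)" for n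
    by (simp add: add_divide_distrib sqrt_divide_self_eq inverse_eq_divide)
  ultimately show "(\<lambda>n. (sqrt (real n) + 1) / real n) \<longlonglongrightarrow> 0" by simp
qed

lemma card_less_mod_in_le:
  assumes "0 < c" "S \<subseteq> {..<c}"
  shows "card {y. y < t \<and> y mod c \<in> S} \<le> card S * (t div c + 1)"
proof -
  have fin: "finite S" using assms(2) finite_subset by blast
  have "{y. y < t \<and> y mod c \<in> S} \<subseteq> (\<lambda>(r, q). q * c + r) ` (S \<times> {..t div c})"
  proof
    fix y assume y: "y \<in> {y. y < t \<and> y mod c \<in> S}"
    then have "y div c \<le> t div c" by (simp add: div_le_mono)
    then show "y \<in> (\<lambda>(r, q). q * c + r) ` (S \<times> {..t div c})"
      using y by (auto intro!: image_eqI[where x = "(y mod c, y div c)"])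
  qed
  then have "card {y. y < t \<and> y mod c \<in> S} \<le> card ((\<lambda>(r, q). q * c + r) ` (S \<times> {..t div c}))"
    using fin by (intro card_mono) auto
  also have "\<dots> \<le> card (S \<times> {..t div c})" by (rule card_image_le) (use fin in auto)
  finally show ?thesis by (simp add: card_cartesian_product)
qed

lemma frequently_dense_if_not_density_zero:
  assumes "\<not> density_zero B"
  obtains \<delta> :: real where "0 < \<delta>" "\<forall>N. \<exists>n\<ge>N. 1 \<le> n \<and> \<delta> * real n \<le> real (card (B \<inter> {..<n}))"
proof -
  let ?f = "partial_density B"
  have "\<not> (\<forall>\<delta>>0. \<forall>\<^sub>F n in sequentially. ?f n < \<delta>)"
  proof
    assume "\<forall>\<delta>>0. \<forall>\<^sub>F n in sequentially. ?f n < \<delta>"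
    then have "?f \<longlonglongrightarrow> 0"
    proof (intro order_tendstoI)
      show "\<forall>\<^sub>F n in sequentially. a < ?f n" if "a < 0" for a :: real
        using that by (intro always_eventually allI)
          (simp add: partial_density_def less_le_trans[OF _ divide_nonneg_nonneg])
    qed simp
    then show False using assms by (simp add: density_zero_def)
  qed
  then obtain \<delta> :: real where \<delta>: "0 < \<delta>" "\<exists>\<^sub>F n in sequentially. \<delta> \<le> ?f n"
    by (auto simp: not_eventually not_less)
  have "\<delta> \<le> ?f n \<Longrightarrow> 1 \<le> n \<and> \<delta> * real n \<le> real (card (B \<inter> {..<n}))" for n
    using \<delta>(1) by (cases "n = 0") (auto simp: partial_density_def field_simps)
  then show ?thesis
    using that[OF \<delta>(1)] \<delta>(2) unfolding frequently_sequentially by blast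
qed

lemma fast_growing_subsequence:
  assumes "\<forall>N. \<exists>n\<ge>N. P n"
  obtains n :: "nat \<Rightarrow> nat" where "\<And>i. P (n i)" "\<And>i. (i + 2) * n i \<le> n (Suc i)"
proof -
  have "\<exists>n. \<forall>i. P (n i) \<and> (i + 2) * n i \<le> n (Suc i)"
    by (rule dependent_nat_choice) (use assms in auto)
  then show ?thesis using that by blast
qed

text \<open>
  Block \<open>i\<close> is \<open>[n i, n (i + 1))\<close> (block 0 also contains \<open>[0, n 0)\<close>), and \<open>block_map\<close> runs
  through the \<open>c i\<close> points \<open>e i 0, \<dots>\<close> below \<open>n i\<close> with period \<open>c i\<close> on block \<open>i\<close>.
\<close>
locale dense_blocks =
  fixes n c :: "nat \<Rightarrow> nat" and e :: "nat \<Rightarrow> nat \<Rightarrow> nat" and \<delta> :: real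
  assumes delta_pos: "0 < \<delta>"
    and n_pos: "1 \<le> n i"
    and n_growth: "(i + 2) * n i \<le> n (Suc i)"
    and c_dense: "\<delta> * real (n i) \<le> real (c i)"
    and e_inj: "inj_on (e i) {..<c i}"
    and e_less: "r < c i \<Longrightarrow> e i r < n i"
begin

definition block :: "nat \<Rightarrow> nat" where
  "block y = (LEAST i. y < n (Suc i))"

definition block_map :: "nat \<Rightarrow> nat" where
  "block_map y = e (block y) (y mod c (block y))"

lemma strict_mono_n: "strict_mono n"
  unfolding strict_mono_Suc_iff
proof
  show "n i < n (Suc i)" for i using n_growth[of i] n_pos[of i] by (simp add: algebra_simps)
qed

lemma less_n_Suc_block: "y < n (Suc (block y))"
proof -
  have "y < n (Suc y)" using seq_suble[OF strict_mono_n, of "Suc y"] by simp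
  then show ?thesis unfolding block_def by (rule LeastI)
qed

lemma block_le: "y < n (Suc i) \<Longrightarrow> block y \<le> i"
  unfolding block_def by (rule Least_le)

lemma le_block: "n i \<le> y \<Longrightarrow> i \<le> block y"
proof (rule ccontr)
  assume "n i \<le> y" "\<not> i \<le> block y"
  then have "n (Suc (block y)) \<le> y"
    using strict_mono_less_eq[OF strict_mono_n, of "Suc (block y)" i] by simp
  then show False using less_n_Suc_block[of y] by simp
qed

lemma n_block_le: "0 < block y \<Longrightarrow> n (block y) \<le> y"
  using block_le[of y "block y - 1"] by (cases "block y") (auto simp: not_less[symmetric])

lemma c_pos: "0 < c i"
  using c_dense[of i] mult_pos_pos[OF delta_pos, of "real (n i)"] n_pos[of i] by linarith

lemma card_block_preimage_le:
  assumes "n i \<le> s"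
  shows "real (card {y. y < s \<and> e i (y mod c i) \<in> A}) \<le> (1 / \<delta> + 1) * partial_density A (n i) * real s"
proof -
  define S where "S = {r. r < c i \<and> e i r \<in> A}"
  define a where "a = real (card (A \<inter> {..<n i}))"
  have "card S \<le> card (A \<inter> {..<n i})"
  proof -
    have "card S = card (e i ` S)"
      using inj_on_subset[OF e_inj, of S i] by (intro card_image[symmetric]) (auto simp: S_def)
    also have "\<dots> \<le> card (A \<inter> {..<n i})"
      using e_less by (intro card_mono) (auto simp: S_def)
    finally show ?thesis .
  qed
  have "{y. y < s \<and> e i (y mod c i) \<in> A} = {y. y < s \<and> y mod c i \<in> S}"
    using c_pos[of i] by (auto simp: S_def)
  then have "card {y. y < s \<and> e i (y mod c i) \<in> A} \<le> card S * (s div c i + 1)"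
    using card_less_mod_in_le[OF c_pos, of S i s] by (simp add: S_def subset_eq)
  also have "\<dots> \<le> card (A \<inter> {..<n i}) * (s div c i + 1)"
    by (rule mult_le_mono1) fact
  finally have "real (card {y. y < s \<and> e i (y mod c i) \<in> A}) \<le> a * (real (s div c i) + 1)"
    unfolding a_def by (metis of_nat_1 of_nat_add of_nat_le_iff of_nat_mult)
  also have "\<dots> \<le> a * (real s / (\<delta> * real (n i)) + real s / real (n i))"
  proof (intro mult_left_mono add_mono)
    have "real (s div c i) \<le> real s / real (c i)" by (rule of_nat_div_le_of_nat)
    also have "\<dots> \<le> real s / (\<delta> * real (n i))"
      using c_dense[of i] delta_pos n_pos[of i] c_pos[of i] by (intro divide_left_mono) auto
    finally show "real (s div c i) \<le> real s / (\<delta> * real (n i))" .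
    show "1 \<le> real s / real (n i)" using assms n_pos[of i] by simp
  qed (simp add: a_def)
  also have "\<dots> = (1 / \<delta> + 1) * (a / real (n i)) * real s"
    using delta_pos n_pos[of i] by (simp add: field_simps)
  finally show ?thesis unfolding a_def partial_density_def .
qed

lemma block_mono: "y \<le> t \<Longrightarrow> block y \<le> block t"
  using less_n_Suc_block[of t] by (intro block_le) simp

lemma preimage_block_map_subset:
  assumes "block t = Suc j"
  shows "block_map -` A \<inter> {..<t} \<subseteq>
    {..<n j} \<union> {y. y < t \<and> e j (y mod c j) \<in> A} \<union> {y. y < t \<and> e (Suc j) (y mod c (Suc j)) \<in> A}"
proof
  fix y assume y: "y \<in> block_map -` A \<inter> {..<t}"
  show "y \<in> {..<n j} \<union> {y. y < t \<and> e j (y mod c j) \<in> A} \<union> {y. y < t \<and> e (Suc j) (y mod c (Suc j)) \<in> A}"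
  proof (cases "y < n j")
    case False
    then have "j \<le> block y" "block y \<le> Suc j"
      using le_block[of j y] block_mono[of y t] y assms by auto
    then have "block y = j \<or> block y = Suc j" by linarith
    then show ?thesis using y by (auto simp: block_map_def)
  qed simp
qed

lemma partial_density_preimage_block_map_le:
  assumes "block t = Suc j"
  shows "partial_density (block_map -` A) t
    \<le> 1 / real (j + 2) + (1 / \<delta> + 1) * (partial_density A (n j) + partial_density A (n (Suc j)))"
proof -
  let ?P = "\<lambda>i. {y. y < t \<and> e i (y mod c i) \<in> A}"
  have t: "n (Suc j) \<le> t" "n j \<le> t"
    using n_block_le[of t] assms strict_mono_less_eq[OF strict_mono_n, of j "Suc j"] by auto
  have "card (block_map -` A \<inter> {..<t}) \<le> card ({..<n j} \<union> ?P j \<union> ?P (Suc j))"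
    using preimage_block_map_subset[OF assms] by (intro card_mono) auto
  also have "\<dots> \<le> n j + card (?P j) + card (?P (Suc j))"
    by (metis (no_types, lifting) add_le_mono1 card_Un_le card_lessThan le_trans)
  finally have card_le: "card (block_map -` A \<inter> {..<t}) \<le> n j + card (?P j) + card (?P (Suc j))" .
  define K where "K = (1 / \<delta> + 1) * (partial_density A (n j) + partial_density A (n (Suc j)))"
  have "real (n j) \<le> real t / real (j + 2)"
  proof -
    have "(j + 2) * n j \<le> t" using n_growth[of j] t(1) by linarith
    then have "real (j + 2) * real (n j) \<le> real t" by (metis of_nat_le_iff of_nat_mult)
    then show ?thesis by (simp add: field_simps)
  qed
  then have "real (card (block_map -` A \<inter> {..<t})) \<le> real t / real (j + 2) + K * real t"
    using card_le card_block_preimage_le[OF t(2), of A] card_block_preimage_le[OF t(1), of A]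
    unfolding K_def partial_density_def by (simp add: algebra_simps)
  then have "partial_density (block_map -` A) t \<le> (real t / real (j + 2) + K * real t) / real t"
    unfolding partial_density_def by (rule divide_right_mono) simp
  also have "\<dots> = 1 / real (j + 2) + K"
    using t n_pos[of j] by (simp add: add_divide_distrib)
  finally show ?thesis unfolding K_def .
qed

lemma filterlim_block_pred_sequentially: "filterlim (\<lambda>t. block t - 1) sequentially sequentially"
  unfolding filterlim_at_top
proof
  fix i
  show "\<forall>\<^sub>F t in sequentially. i \<le> block t - 1"
    using eventually_ge_at_top[of "n (Suc i)"]
  proof eventually_elim
    case (elim t)
    then show ?case using le_block[of "Suc i" t] by simp
  qed
qed

lemma density_zero_preimage_block_map:
  assumes "density_zero A"
  shows "density_zero (block_map -` A)"
proof -
  define R where "R j = 1 / real (j + 2)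
    + (1 / \<delta> + 1) * (partial_density A (n j) + partial_density A (n (Suc j)))" for j
  have "(\<lambda>j. partial_density A (n j)) \<longlonglongrightarrow> 0"
    using LIMSEQ_subseq_LIMSEQ[OF assms[unfolded density_zero_def] strict_mono_n] by (simp add: comp_def)
  moreover have "(\<lambda>j. 1 / real (j + 2)) \<longlonglongrightarrow> 0"
    using LIMSEQ_Suc[OF LIMSEQ_Suc[OF lim_inverse_n']] by simp
  ultimately have "R \<longlonglongrightarrow> 0 + (1 / \<delta> + 1) * (0 + 0)"
    unfolding R_def by (intro tendsto_add tendsto_mult tendsto_const LIMSEQ_Suc)
  then have lim: "(\<lambda>t. R (block t - 1)) \<longlonglongrightarrow> 0"
    by (intro filterlim_compose[OF _ filterlim_block_pred_sequentially]) simp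
  have upper: "\<forall>\<^sub>F t in sequentially. partial_density (block_map -` A) t \<le> R (block t - 1)"
    using eventually_ge_at_top[of "n 1"]
  proof eventually_elim
    case (elim t)
    then have "block t = Suc (block t - 1)" using le_block[of 1 t] by simp
    then show ?case unfolding R_def by (rule partial_density_preimage_block_map_le)
  qed
  have lower: "\<forall>\<^sub>F t in sequentially. 0 \<le> partial_density (block_map -` A) t"
    by (simp add: partial_density_def)
  show ?thesis
    unfolding density_zero_def by (rule tendsto_sandwich[OF lower upper tendsto_const lim])
qed

end

lemma map_into_with_density_zero_preimages:
  assumes "\<not> density_zero B"
  obtains \<sigma> where "\<And>y. \<sigma> y \<in> B" "\<And>A. density_zero A \<Longrightarrow> density_zero (\<sigma> -` A)"
proof -
  obtain \<delta> where \<delta>: "0 < \<delta>" "\<forall>N. \<exists>m\<ge>N. 1 \<le> m \<and> \<delta> * real m \<le> real (card (B \<inter> {..<m}))"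
    using frequently_dense_if_not_density_zero[OF assms] by blast
  obtain n where n: "\<And>i. 1 \<le> n i \<and> \<delta> * real (n i) \<le> real (card (B \<inter> {..<n i}))"
    and growth: "\<And>i. (i + 2) * n i \<le> n (Suc i)"
    using fast_growing_subsequence[OF \<delta>(2)] by blast
  define c where "c i = card (B \<inter> {..<n i})" for i
  have "\<forall>i. \<exists>f. bij_betw f {..<c i} (B \<inter> {..<n i})"
    unfolding c_def lessThan_atLeast0 by (intro allI ex_bij_betw_nat_finite) simp
  then obtain e where e: "\<And>i. bij_betw (e i) {..<c i} (B \<inter> {..<n i})" by metis
  interpret dense_blocks n c e \<delta>
  proof
    show "inj_on (e i) {..<c i}" for i using e bij_betw_imp_inj_on by blast
    show "r < c i \<Longrightarrow> e i r < n i" for r i using bij_betwE[OF e[of i]] by blast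
  qed (use \<delta>(1) n growth in \<open>auto simp: c_def\<close>)
  show thesis
  proof (rule that[of block_map])
    show "block_map y \<in> B" for y
      using bij_betwE[OF e[of "block y"]] c_pos[of "block y"] by (auto simp: block_map_def)
  qed (rule density_zero_preimage_block_map)
qed

definition op_of :: "nat \<Rightarrow> (nat list \<Rightarrow> nat) \<Rightarrow> op" where
  "op_of k f = (k, \<lambda>xs. if length xs = k then f xs else 0)"

lemma op_of_in_all_ops: "1 \<le> k \<Longrightarrow> op_of k f \<in> all_ops"
  by (simp add: op_of_def all_ops_def)

lemma op_of_fst_snd: "F \<in> all_ops \<Longrightarrow> op_of (fst F) (snd F) = F"
  by (auto simp: op_of_def all_ops_def)

lemma snd_op_of: "length xs = k \<Longrightarrow> snd (op_of k f) xs = f xs"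
  by (simp add: op_of_def)

lemma op_of_cong: "(\<And>xs. length xs = k \<Longrightarrow> f xs = g xs) \<Longrightarrow> op_of k f = op_of k g"
  by (auto simp: op_of_def)

lemma compose_eq_op_of: "compose F Gs k = op_of k (\<lambda>xs. snd F (map (\<lambda>G. snd G xs) Gs))"
  by (simp add: compose_def op_of_def)

lemma image_pow_op_of: "image_pow (op_of k f) A = f ` {xs. length xs = k \<and> set xs \<subseteq> A}"
  by (auto simp: image_pow_def op_of_def)

lemma clone_subset_all_ops: "is_clone D \<Longrightarrow> D \<subseteq> all_ops"
  by (simp add: is_clone_def)

lemma clone_compose:
  assumes "is_clone D" "F \<in> D" "length Gs = fst F" "1 \<le> k" "\<And>G. G \<in> set Gs \<Longrightarrow> G \<in> D \<and> fst G = k"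
  shows "compose F Gs k \<in> D"
  using assms unfolding is_clone_def by blast

lemma C_d0_iff:
  "F \<in> C_d0 \<longleftrightarrow> F \<in> all_ops \<and> (\<forall>A. density_zero A \<longrightarrow> density_zero (image_pow F A))"
  by (simp add: C_d0_def upper_density_eq_0_iff)

lemma op_of_in_C_d0_if_range_subset:
  assumes "1 \<le> k" "density_zero T" "\<And>xs. length xs = k \<Longrightarrow> f xs \<in> T"
  shows "op_of k f \<in> C_d0"
proof -
  have "image_pow (op_of k f) A \<subseteq> T" for A
    using assms(3) by (auto simp: image_pow_op_of)
  then show ?thesis
    using assms(1,2) by (auto simp: C_d0_iff op_of_in_all_ops intro: density_zero_subset)
qed

lemma is_clone_C_d0: "is_clone C_d0"
  unfolding is_clone_def
proof (intro conjI allI impI)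
  show "C_d0 \<subseteq> all_ops" by (auto simp: C_d0_iff)
next
  fix k i :: nat assume ki: "1 \<le> k \<and> i < k"
  have "image_pow (proj k i) A \<subseteq> A" for A
    using ki by (auto simp: image_pow_def proj_def)
  moreover have "proj k i \<in> all_ops" using ki by (simp add: all_ops_def proj_def)
  ultimately show "proj k i \<in> C_d0" using density_zero_subset by (auto simp: C_d0_iff)
next
  fix F :: op and Gs k
  assume h: "F \<in> C_d0 \<and> length Gs = fst F \<and> 1 \<le> k \<and> (\<forall>G\<in>set Gs. G \<in> C_d0 \<and> fst G = k)"
  have "density_zero (image_pow (compose F Gs k) A)" if A: "density_zero A" for A
  proof -
    let ?U = "\<Union>G\<in>set Gs. image_pow G A"
    have "density_zero ?U" using h A by (intro density_zero_finite_UN) (auto simp: C_d0_iff)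
    then have "density_zero (image_pow F ?U)" using h by (auto simp: C_d0_iff)
    moreover have "image_pow (compose F Gs k) A \<subseteq> image_pow F ?U"
    proof
      fix v assume "v \<in> image_pow (compose F Gs k) A"
      then obtain xs where xs: "length xs = k" "set xs \<subseteq> A" "v = snd F (map (\<lambda>G. snd G xs) Gs)"
        by (auto simp: image_pow_def compose_def)
      moreover have "set (map (\<lambda>G. snd G xs) Gs) \<subseteq> ?U"
        using xs h by (auto simp: image_pow_def)
      ultimately show "v \<in> image_pow F ?U" using h by (auto simp: image_pow_def)
    qed
    ultimately show ?thesis by (rule density_zero_subset)
  qed
  then show "compose F Gs k \<in> C_d0"
    using h by (simp add: C_d0_iff compose_eq_op_of op_of_in_all_ops)
qed

lemma C_d0_neq_all_ops: "C_d0 \<noteq> all_ops"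
proof
  assume "C_d0 = all_ops"
  then have "op_of 1 (\<lambda>xs. floor_sqrt (hd xs)) \<in> C_d0" by (simp add: op_of_in_all_ops)
  then have "density_zero (image_pow (op_of 1 (\<lambda>xs. floor_sqrt (hd xs))) squares)"
    using density_zero_squares by (simp add: C_d0_iff)
  moreover have "image_pow (op_of 1 (\<lambda>xs. floor_sqrt (hd xs))) squares = UNIV"
  proof (intro set_eqI iffI)
    fix y :: nat
    have "y = floor_sqrt (hd [y\<^sup>2])" "[y\<^sup>2] \<in> {xs. length xs = 1 \<and> set xs \<subseteq> squares}"
      by (auto simp: squares_def)
    then show "y \<in> image_pow (op_of 1 (\<lambda>xs. floor_sqrt (hd xs))) squares"
      unfolding image_pow_op_of by blast
  qed simp
  ultimately show False using not_density_zero_UNIV by simp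
qed

lemma op_of_in_clone_if_range_subset_image_pow:
  assumes D: "is_clone D" "C_d0 \<subseteq> D" and F: "F \<in> D" and A: "density_zero A"
    and k: "1 \<le> k" and g: "\<And>xs. length xs = k \<Longrightarrow> g xs \<in> image_pow F A"
  shows "op_of k g \<in> D"
proof -
  have "\<forall>b\<in>image_pow F A. \<exists>ys. length ys = fst F \<and> set ys \<subseteq> A \<and> snd F ys = b"
    unfolding image_pow_def by blast
  from bchoice[OF this] obtain tup
    where "\<forall>b\<in>image_pow F A. length (tup b) = fst F \<and> set (tup b) \<subseteq> A \<and> snd F (tup b) = b" ..
  then have tup: "length (tup (g xs)) = fst F" "set (tup (g xs)) \<subseteq> A" "snd F (tup (g xs)) = g xs"
    if "length xs = k" for xs
    using g[OF that] by auto
  define v where "v i = op_of k (\<lambda>xs. tup (g xs) ! i)" for i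
  have vC: "v i \<in> C_d0" if "i < fst F" for i
    unfolding v_def
  proof (rule op_of_in_C_d0_if_range_subset[OF k A])
    fix xs :: "nat list" assume "length xs = k"
    then show "tup (g xs) ! i \<in> A" using tup(1,2) that by (metis nth_mem subsetD)
  qed
  have "compose F (map v [0..<fst F]) k \<in> D"
  proof (rule clone_compose[OF D(1) F])
    fix G assume "G \<in> set (map v [0..<fst F])"
    then obtain i where "i < fst F" "G = v i" by auto
    then show "G \<in> D \<and> fst G = k" using D(2) vC[of i] by (auto simp: v_def op_of_def)
  qed (use k in simp_all)
  moreover have "compose F (map v [0..<fst F]) k = op_of k g"
    unfolding compose_eq_op_of
  proof (rule op_of_cong)
    fix xs :: "nat list" assume xs: "length xs = k"
    have "map (\<lambda>G. snd G xs) (map v [0..<fst F]) = map (\<lambda>i. tup (g xs) ! i) [0..<fst F]"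
      using xs by (simp add: v_def snd_op_of)
    also have "\<dots> = tup (g xs)" using tup(1)[OF xs] by (metis map_nth)
    finally show "snd F (map (\<lambda>G. snd G xs) (map v [0..<fst F])) = g xs"
      using tup(3)[OF xs] by simp
  qed
  ultimately show ?thesis by simp
qed

definition sqrt_decoder :: "(nat \<Rightarrow> nat) \<Rightarrow> op" where
  "sqrt_decoder \<sigma> = op_of 2 (\<lambda>xs. let r = floor_sqrt (xs ! 0) in
     if r\<^sup>2 = xs ! 0 \<and> \<sigma> r = xs ! 1 then r else 0)"

lemma sqrt_decoder_square: "snd (sqrt_decoder \<sigma>) [r\<^sup>2, \<sigma> r] = r"
  by (simp add: sqrt_decoder_def snd_op_of)

lemma sqrt_decoder_in_C_d0:
  assumes "\<And>A. density_zero A \<Longrightarrow> density_zero (\<sigma> -` A)"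
  shows "sqrt_decoder \<sigma> \<in> C_d0"
  unfolding C_d0_iff
proof (intro conjI allI impI)
  show "sqrt_decoder \<sigma> \<in> all_ops" by (simp add: sqrt_decoder_def op_of_in_all_ops)
  fix A assume A: "density_zero A"
  have "image_pow (sqrt_decoder \<sigma>) A \<subseteq> insert 0 (\<sigma> -` A)"
  proof
    fix u assume "u \<in> image_pow (sqrt_decoder \<sigma>) A"
    then obtain xs where xs: "length xs = 2" "set xs \<subseteq> A" "u = snd (sqrt_decoder \<sigma>) xs"
      unfolding image_pow_def by (auto simp: sqrt_decoder_def op_of_def)
    then have "xs ! 1 \<in> A" by (auto intro: nth_mem)
    then show "u \<in> insert 0 (\<sigma> -` A)" using xs by (auto simp: sqrt_decoder_def snd_op_of Let_def)
  qed
  moreover have "density_zero (insert 0 (\<sigma> -` A))"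
    using density_zero_Un[OF density_zero_finite assms[OF A], of "{0}"] by simp
  ultimately show "density_zero (image_pow (sqrt_decoder \<sigma>) A)" using density_zero_subset by blast
qed

lemma clone_psupset_C_d0_eq_all_ops:
  assumes D: "is_clone D" "C_d0 \<subset> D"
  shows "D = all_ops"
proof
  show "D \<subseteq> all_ops" using D(1) by (rule clone_subset_all_ops)
  have CD: "C_d0 \<subseteq> D" using D(2) by blast
  obtain F where F: "F \<in> D" "F \<notin> C_d0" using D(2) by blast
  then obtain A where A: "density_zero A" "\<not> density_zero (image_pow F A)"
    using clone_subset_all_ops[OF D(1)] by (auto simp: C_d0_iff)
  obtain \<sigma> where \<sigma>: "\<And>y. \<sigma> y \<in> image_pow F A" "\<And>A. density_zero A \<Longrightarrow> density_zero (\<sigma> -` A)"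
    using map_into_with_density_zero_preimages[OF A(2)] by blast
  show "all_ops \<subseteq> D"
  proof
    fix H assume H: "H \<in> all_ops"
    define k where "k = fst H"
    have k: "1 \<le> k" using H by (simp add: k_def all_ops_def split: prod.splits)
    have "op_of k (\<lambda>xs. \<sigma> (snd H xs)) \<in> D"
      using D(1) CD F(1) A(1) k \<sigma>(1) by (intro op_of_in_clone_if_range_subset_image_pow) auto
    moreover have "op_of k (\<lambda>xs. (snd H xs)\<^sup>2) \<in> D"
      using CD k density_zero_squares
      by (auto intro!: op_of_in_C_d0_if_range_subset simp: squares_def)
    moreover have "sqrt_decoder \<sigma> \<in> D" using CD sqrt_decoder_in_C_d0[OF \<sigma>(2)] by blast
    ultimately have "compose (sqrt_decoder \<sigma>) [op_of k (\<lambda>xs. (snd H xs)\<^sup>2), op_of k (\<lambda>xs. \<sigma> (snd H xs))] k \<in> D"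
      using k by (intro clone_compose[OF D(1)]) (auto simp: sqrt_decoder_def op_of_def)
    also have "compose (sqrt_decoder \<sigma>) [op_of k (\<lambda>xs. (snd H xs)\<^sup>2), op_of k (\<lambda>xs. \<sigma> (snd H xs))] k = H"
      using H by (simp add: compose_eq_op_of snd_op_of sqrt_decoder_square op_of_fst_snd k_def cong: op_of_cong)
    finally show "H \<in> D" .
  qed
qed

theorem mainTheorem7:
  shows "precomplete C_d0"
  unfolding precomplete_def
  using is_clone_C_d0 C_d0_neq_all_ops clone_psupset_C_d0_eq_all_ops by blast

end
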